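(* Let $\Sigma\in\mathbb{R}^{d\times d}$ be symmetric positive definite, $m_0,m_\pi\in\mathbb{R}^d$, $\mu_0=\mathcal{N}(m_0,\Sigma)$, $\pi=\mathcal{N}(m_\pi,\Sigma)$, $\mathcal{F}(\mu)=\mathrm{KL}(\mu|\pi)$, $w_0>0$, $L>0$, and let $(\varphi_t,\mu_t)_{t\ge1}$ be produced by Coin Wasserstein Gradient Descent. Then for every $t\ge1$ there is $m_t\in\mathbb{R}^d$ (with $m_1=m_0$) such that $\mu_t=\mathcal{N}(m_t,\Sigma)$ and $\varphi_t(x)=m_t+(x-m_0)$ for all $x\in\mathbb{R}^d$; in particular $\varphi_t$ is the optimal transport map from $\mu_0$ to $\mu_t$, and $t_{\mu_t}^\pi\circ\varphi_t=t_{\mu_0}^\pi$, where $t_\mu^\nu$ denotes the optimal transport map from $\mu$ to $\nu$.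
   Context: For $\mathcal{F}(\mu)=\mathrm{KL}(\mu|\pi)$ the Wasserstein gradient is $\nabla_{W_2}\mathcal{F}(\mu)=\nabla\log\mu-\nabla\log\pi$ (densities). Coin Wasserstein Gradient Descent (Algorithm 1): set $\varphi_1=\mathrm{id}$, $\mu_1=\mu_0$; for $t\ge2$, with $g_s(x):=\nabla_{W_2}\mathcal{F}(\mu_s)(\varphi_s(x))$, $$\varphi_t(x)=x-\frac{\sum_{s=1}^{t-1}g_s(x)}{Lt}\Big(w_0-\sum_{s=1}^{t-1}\Big\langle\frac1L g_s(x),\varphi_s(x)-x\Big\rangle\Big),\qquad\mu_t=(\varphi_t)_\#\mu_0.$$ *)

theory Defs
  imports "HOL-Analysis.Analysis"
begin

definition sym_pos_def_matrix :: "real^'n^'n \<Rightarrow> bool" where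
  "sym_pos_def_matrix S \<longleftrightarrow> transpose S = S \<and> (\<forall>x. x \<noteq> 0 \<longrightarrow> x \<bullet> (S *v x) > 0)"

definition gauss_pdf :: "real^'n \<Rightarrow> real^'n^'n \<Rightarrow> real^'n \<Rightarrow> real" where
  "gauss_pdf m S x =
     (2 * pi) powr (- real CARD('n) / 2) * (det S) powr (- 1 / 2)
     * exp (- (1/2) * ((x - m) \<bullet> (matrix_inv S *v (x - m))))"

definition gaussian :: "real^'n \<Rightarrow> real^'n^'n \<Rightarrow> (real^'n) measure" where
  "gaussian m S = density lborel (\<lambda>x. ennreal (gauss_pdf m S x))"

definition log_density_grad :: "(real^'n) measure \<Rightarrow> (real^'n \<Rightarrow> real^'n) \<Rightarrow> bool" where
  "log_density_grad \<mu> g \<longleftrightarrow>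
     (\<exists>p. (\<forall>x. p x > 0) \<and> \<mu> = density lborel (\<lambda>x. ennreal (p x)) \<and>
          (\<forall>x. ((\<lambda>y. ln (p y)) has_derivative (\<lambda>h. g x \<bullet> h)) (at x)))"

definition wgrad_KL :: "(real^'n) measure \<Rightarrow> (real^'n) measure \<Rightarrow> (real^'n \<Rightarrow> real^'n) \<Rightarrow> bool" where
  "wgrad_KL \<mu> \<pi> G \<longleftrightarrow>
     (\<exists>g\<mu> g\<pi>. log_density_grad \<mu> g\<mu> \<and> log_density_grad \<pi> g\<pi> \<and> G = (\<lambda>x. g\<mu> x - g\<pi> x))"

text \<open>(phi, mu) is a run of Coin Wasserstein Gradient Descent (Algorithm 1) for F = KL(.|pi),
  started at mu0, with parameters w0 and L; indices t >= 1 (values at t = 0 are irrelevant).\<close>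
definition coin_wgd ::
  "(real^'n) measure \<Rightarrow> (real^'n) measure \<Rightarrow> real \<Rightarrow> real
    \<Rightarrow> (nat \<Rightarrow> real^'n \<Rightarrow> real^'n) \<Rightarrow> (nat \<Rightarrow> (real^'n) measure) \<Rightarrow> bool" where
  "coin_wgd \<mu>0 \<pi> w0 L \<phi> \<mu> \<longleftrightarrow>
     (\<exists>G :: nat \<Rightarrow> real^'n \<Rightarrow> real^'n.
        \<phi> 1 = id \<and> \<mu> 1 = \<mu>0 \<and>
        (\<forall>t\<ge>1. \<phi> t \<in> borel_measurable lborel \<and> \<mu> t = distr \<mu>0 lborel (\<phi> t)) \<and>
        (\<forall>t\<ge>1. wgrad_KL (\<mu> t) \<pi> (G t)) \<and>
        (\<forall>t\<ge>2. \<forall>x. \<phi> t x =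
            x - ((w0 - (\<Sum>s\<in>{1..t-1}. ((1/L) *\<^sub>R G s (\<phi> s x)) \<bullet> (\<phi> s x - x))) / (L * real t))
                  *\<^sub>R (\<Sum>s\<in>{1..t-1}. G s (\<phi> s x))))"

definition transport_cost :: "(real^'n) measure \<Rightarrow> (real^'n \<Rightarrow> real^'n) \<Rightarrow> ennreal" where
  "transport_cost \<mu> T = (\<integral>\<^sup>+ x. ennreal ((norm (x - T x))\<^sup>2) \<partial>\<mu>)"

definition is_ot_map :: "(real^'n) measure \<Rightarrow> (real^'n) measure \<Rightarrow> (real^'n \<Rightarrow> real^'n) \<Rightarrow> bool" where
  "is_ot_map \<mu> \<nu> T \<longleftrightarrow>
     T \<in> borel_measurable \<mu> \<and> distr \<mu> lborel T = \<nu> \<and>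
     (\<forall>S. S \<in> borel_measurable \<mu> \<and> distr \<mu> lborel S = \<nu> \<longrightarrow> transport_cost \<mu> T \<le> transport_cost \<mu> S)"

end

theory Submission
  imports Defs "HOL-Probability.Distributions"
begin

text \<open>
  If \<open>\<mu>\<close> and \<open>\<pi>\<close> are Gaussians with the same covariance, their log-densities are quadratics with
  the same Hessian, so the Wasserstein gradient of \<open>KL(\<cdot>|\<pi>)\<close> at \<open>\<mu>\<close> is a constant vector. If
  \<open>\<phi>\<^sub>1, \<dots>, \<phi>\<^sub>t\<^sub>-\<^sub>1\<close> are translations, then every \<open>\<mu>\<^sub>s\<close> is a translate of \<open>\<mu>\<^sub>0\<close>, all
  gradients \<open>g\<^sub>s\<close> are constant, and the Coin update moves every point by the same vector: by
  induction each \<open>\<phi>\<^sub>t\<close> is a translation \<open>x \<mapsto> x + v\<close> and \<open>\<mu>\<^sub>t = N(m\<^sub>0 + v, \<Sigma>)\<close>.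

  For optimality, if \<open>U\<close> and \<open>W\<close> push a measure with finite first moment to the same target,
  the quadratic costs of \<open>U - v\<close> and \<open>U\<close> differ by a constant depending only on \<open>v\<close> and the
  two means, the same constant as for \<open>W\<close>. Hence precomposing with a translation preserves
  optimality; applied to the identity, which is optimal from \<open>\<mu>\<^sub>t\<close> to itself, it shows that
  \<open>\<phi>\<^sub>t\<close> is optimal from \<open>\<mu>\<^sub>0\<close> to \<open>\<mu>\<^sub>t\<close>.
\<close>

subsection \<open>Symmetric positive definite matrices\<close>

lemma sym_pos_def_matrix_invertible:
  fixes S :: "real^'n^'n"
  assumes "sym_pos_def_matrix S"
  shows "invertible S"
proof -
  have "inj ((*v) S)"
  proof (rule injI)
    fix x y assume "S *v x = S *v y"
    then have "(x - y) \<bullet> (S *v (x - y)) = 0"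
      by (simp add: matrix_vector_mult_diff_distrib)
    then show "x = y"
      using assms unfolding sym_pos_def_matrix_def by (metis eq_iff_diff_eq_0 less_irrefl)
  qed
  then show ?thesis
    by (simp add: invertible_left_inverse matrix_left_invertible_injective)
qed

lemma sym_pos_def_matrix_det_nonzero:
  "sym_pos_def_matrix S \<Longrightarrow> det S \<noteq> 0"
  using sym_pos_def_matrix_invertible invertible_det_nz by blast

lemma sym_pos_def_matrix_inv_pos:
  fixes S :: "real^'n^'n"
  assumes "sym_pos_def_matrix S" "x \<noteq> 0"
  shows "x \<bullet> (matrix_inv S *v x) > 0"
proof -
  define y where "y = matrix_inv S *v x"
  have "S ** matrix_inv S = mat 1"
    using sym_pos_def_matrix_invertible[OF assms(1)]
    unfolding invertible_def matrix_inv_def by (rule someI_ex[THEN conjunct1])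
  then have x: "x = S *v y"
    by (simp add: y_def matrix_vector_mul_assoc)
  with assms have "y \<bullet> (S *v y) > 0"
    unfolding sym_pos_def_matrix_def by (metis matrix_vector_mult_0_right)
  moreover have "x \<bullet> (matrix_inv S *v x) = (S *v y) \<bullet> y"
    using x y_def by simp
  ultimately show ?thesis
    by (simp add: inner_commute)
qed

lemma quadratic_form_coercive:
  fixes A :: "real^'n^'n"
  assumes pos: "\<And>x. x \<noteq> 0 \<Longrightarrow> x \<bullet> (A *v x) > 0"
  obtains c where "c > 0" "\<And>x. c * (norm x)\<^sup>2 \<le> x \<bullet> (A *v x)"
proof -
  let ?q = "\<lambda>x. x \<bullet> (A *v x)"
  have "continuous_on (sphere 0 1) ?q"
    by (intro continuous_intros linear_continuous_on matrix_vector_mul_bounded_linear)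
  moreover have "sphere (0::real^'n) 1 \<noteq> {}"
    using vector_choose_size[of 1] by auto
  ultimately obtain u where u: "u \<in> sphere 0 1" "\<And>y. y \<in> sphere 0 1 \<Longrightarrow> ?q u \<le> ?q y"
    using continuous_attains_inf[OF compact_sphere] by blast
  have "?q u * (norm x)\<^sup>2 \<le> ?q x" for x
  proof (cases "x = 0")
    case False
    define y where "y = (1 / norm x) *\<^sub>R x"
    have y: "y \<in> sphere 0 1" and x: "x = norm x *\<^sub>R y"
      using False by (auto simp: y_def)
    have "?q x = (norm x)\<^sup>2 * ?q y"
      by (subst x, subst x) (simp add: matrix_vector_mult_scaleR power2_eq_square)
    then show ?thesis
      using u(2)[OF y] by (simp add: mult_right_mono mult.commute)
  qed simp
  moreover have "?q u > 0"
    using u(1) by (intro pos) auto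
  ultimately show ?thesis
    using that by blast
qed

subsection \<open>The Wasserstein gradient of the KL divergence between Gaussians\<close>

lemma continuous_on_AE_lborel_eq:
  fixes p q :: "'a::euclidean_space \<Rightarrow> real"
  assumes "continuous_on UNIV p" "continuous_on UNIV q" "AE x in lborel. p x = q x"
  shows "p = q"
proof -
  obtain N where N: "{x \<in> space lborel. \<not> p x = q x} \<subseteq> N" "emeasure lborel N = 0"
    "N \<in> sets lborel"
    using assms(3) by (rule AE_E)
  then have "negligible N"
    by (simp add: negligible_iff_null_sets null_sets_completionI null_setsI)
  then have "negligible {x. p x \<noteq> q x}"
    using N(1) by (auto intro: negligible_subset)
  moreover have "open {x. p x \<noteq> q x}"
    using open_Collect_neq[OF assms(1,2)] .
  ultimately have "{x. p x \<noteq> q x} = {}"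
    using open_not_negligible by blast
  then show ?thesis
    by auto
qed

lemma log_density_grad_unique:
  assumes "log_density_grad \<mu> g" "log_density_grad \<mu> g'"
  shows "g = g'"
proof -
  have continuous: "continuous_on UNIV p"
    if "\<forall>x. p x > 0" "\<forall>x. ((\<lambda>y. ln (p y)) has_derivative (\<lambda>h. g x \<bullet> h)) (at x)"
    for p :: "real^'n \<Rightarrow> real" and g
  proof -
    have "continuous_on UNIV (\<lambda>x. exp (ln (p x)))"
      using that(2) has_derivative_continuous
      by (intro continuous_on_exp continuous_at_imp_continuous_on) blast
    with that(1) show ?thesis
      by simp
  qed
  obtain p where p: "\<forall>x. p x > 0" "\<mu> = density lborel (\<lambda>x. ennreal (p x))"
    "\<forall>x. ((\<lambda>y. ln (p y)) has_derivative (\<lambda>h. g x \<bullet> h)) (at x)"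
    using assms(1) unfolding log_density_grad_def by blast
  obtain p' where p': "\<forall>x. p' x > 0" "\<mu> = density lborel (\<lambda>x. ennreal (p' x))"
    "\<forall>x. ((\<lambda>y. ln (p' y)) has_derivative (\<lambda>h. g' x \<bullet> h)) (at x)"
    using assms(2) unfolding log_density_grad_def by blast
  have cont: "continuous_on UNIV p" "continuous_on UNIV p'"
    using continuous p p' by blast+
  then have meas: "(\<lambda>x. ennreal (p x)) \<in> borel_measurable lborel"
    "(\<lambda>x. ennreal (p' x)) \<in> borel_measurable lborel"
    using borel_measurable_continuous_onI[OF cont(1)] borel_measurable_continuous_onI[OF cont(2)]
    by simp_all
  then have "AE x in lborel. ennreal (p x) = ennreal (p' x)"
    using sigma_finite_measure.density_unique_iff[OF sigma_finite_lborel meas] p(2) p'(2) by simp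
  then have "AE x in lborel. p x = p' x"
    by eventually_elim (use p(1) p'(1) in \<open>auto simp: less_imp_le\<close>)
  then have "p = p'"
    using continuous_on_AE_lborel_eq[OF cont] by blast
  show ?thesis
  proof
    fix x
    have "(\<lambda>h. g x \<bullet> h) = (\<lambda>h. g' x \<bullet> h)"
      using p(3) p'(3) \<open>p = p'\<close> by (metis has_derivative_unique)
    then have "g x \<bullet> (g x - g' x) = g' x \<bullet> (g x - g' x)"
      by (rule fun_cong)
    then have "(g x - g' x) \<bullet> (g x - g' x) = 0"
      by (simp add: inner_diff_left)
    then show "g x = g' x"
      by simp
  qed
qed

lemma gauss_pdf_pos: "det S \<noteq> 0 \<Longrightarrow> gauss_pdf m S x > 0"
  unfolding gauss_pdf_def by simp

text \<open>Written with the symmetrised matrix, so that no symmetry of the inverse is needed.\<close>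
definition gauss_log_grad :: "real^'n^'n \<Rightarrow> real^'n \<Rightarrow> real^'n \<Rightarrow> real^'n" where
  "gauss_log_grad S m x = - ((1/2) *\<^sub>R ((matrix_inv S + transpose (matrix_inv S)) *v (x - m)))"

lemma has_derivative_ln_gauss_pdf:
  fixes S :: "real^'n^'n"
  assumes "det S \<noteq> 0"
  shows "((\<lambda>y. ln (gauss_pdf m S y)) has_derivative (\<lambda>h. gauss_log_grad S m x \<bullet> h)) (at x)"
proof -
  let ?A = "matrix_inv S"
  let ?c = "ln ((2 * pi) powr (- real CARD('n) / 2) * (det S) powr (- 1 / 2))"
  have ln_pdf: "ln (gauss_pdf m S y) = ?c - (1/2) * ((y - m) \<bullet> (?A *v (y - m)))" for y
    using assms unfolding gauss_pdf_def by (simp add: ln_mult)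
  have "((\<lambda>y. ?A *v (y - m)) has_derivative (\<lambda>h. ?A *v h)) (at x)"
    using bounded_linear.has_derivative[OF matrix_vector_mul_bounded_linear
        has_derivative_diff[OF has_derivative_ident has_derivative_const]]
    by simp
  then have "((\<lambda>y. ?c - (1/2) * ((y - m) \<bullet> (?A *v (y - m)))) has_derivative
      (\<lambda>h. 0 - (1/2) * (h \<bullet> (?A *v (x - m)) + (x - m) \<bullet> (?A *v h)))) (at x)"
    by (intro derivative_eq_intros) auto
  moreover have "0 - (1/2) * (h \<bullet> (?A *v (x - m)) + (x - m) \<bullet> (?A *v h)) = gauss_log_grad S m x \<bullet> h"
    for h
    by (simp add: gauss_log_grad_def matrix_vector_mult_add_rdistrib inner_add_left
        dot_lmul_matrix[symmetric] inner_commute algebra_simps)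
  ultimately show ?thesis
    unfolding ln_pdf by simp
qed

lemma log_density_grad_gaussian:
  "det S \<noteq> 0 \<Longrightarrow> log_density_grad (gaussian m S) (gauss_log_grad S m)"
  unfolding log_density_grad_def gaussian_def
  using gauss_pdf_pos has_derivative_ln_gauss_pdf by blast

text \<open>Both log-gradients are affine with the same linear part, so their difference is constant.\<close>
lemma wgrad_KL_gaussian_const:
  assumes "det S \<noteq> 0" "wgrad_KL (gaussian m S) (gaussian m' S) G"
  shows "G x = G y"
proof -
  obtain g g' where "log_density_grad (gaussian m S) g" "log_density_grad (gaussian m' S) g'"
    and G: "G = (\<lambda>x. g x - g' x)"
    using assms(2) unfolding wgrad_KL_def by blast
  then have "g = gauss_log_grad S m" "g' = gauss_log_grad S m'"
    using log_density_grad_unique log_density_grad_gaussian[OF assms(1)] by blast+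
  then show ?thesis
    by (simp add: G gauss_log_grad_def matrix_vector_mult_diff_distrib algebra_simps)
qed

subsection \<open>Translates and moments of Gaussian measures\<close>

lemma sets_gaussian [simp, measurable_cong]: "sets (gaussian m S) = sets borel"
  unfolding gaussian_def by simp

lemma continuous_on_gauss_pdf: "continuous_on UNIV (gauss_pdf m S)"
proof -
  have "continuous_on UNIV (\<lambda>x. matrix_inv S *v (x - m))"
    by (intro linear_continuous_on_compose[OF _ matrix_vector_mul_linear] continuous_on_diff
        continuous_on_id continuous_on_const)
  then show ?thesis
    unfolding gauss_pdf_def[abs_def] by (intro continuous_intros)
qed

lemma borel_measurable_gauss_pdf [measurable]: "gauss_pdf m S \<in> borel_measurable borel"
  by (rule borel_measurable_continuous_onI[OF continuous_on_gauss_pdf])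

lemma gauss_pdf_translate: "gauss_pdf (m + v) S (x + v) = gauss_pdf m S x"
  unfolding gauss_pdf_def by simp

lemma distr_gaussian_translate:
  "distr (gaussian m S) lborel (\<lambda>x. x + v) = gaussian (m + v) S"
proof -
  have "gaussian (m + v) S = density (distr lborel borel ((+) v)) (\<lambda>x. ennreal (gauss_pdf (m + v) S x))"
    unfolding gaussian_def lborel_distr_plus ..
  also have "\<dots> = distr (density lborel (\<lambda>x. ennreal (gauss_pdf (m + v) S (v + x)))) borel ((+) v)"
    by (rule density_distr) auto
  also have "\<dots> = distr (gaussian m S) lborel (\<lambda>x. x + v)"
    unfolding gaussian_def using gauss_pdf_translate[of m v S]
    by (intro distr_cong) (simp_all add: add.commute)
  finally show ?thesis ..
qed

lemma one_add_sum_le_prod_one_add: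
  fixes f :: "'a \<Rightarrow> real"
  assumes "finite I" "\<And>i. i \<in> I \<Longrightarrow> 0 \<le> f i"
  shows "1 + sum f I \<le> (\<Prod>i\<in>I. 1 + f i)"
  using assms
proof (induction I rule: finite_induct)
  case (insert i I)
  then have "1 + sum f (insert i I) \<le> (1 + f i) * (1 + sum f I)"
    by (simp add: algebra_simps sum_nonneg)
  also have "\<dots> \<le> (1 + f i) * (\<Prod>i\<in>I. 1 + f i)"
    using insert by (intro mult_left_mono) auto
  finally show ?case
    using insert by simp
qed simp

lemma nn_integral_exp_neg_square_moment_finite_real:
  fixes a :: real
  assumes "a > 0"
  shows "(\<integral>\<^sup>+t. ennreal (exp (- a * t\<^sup>2) * (1 + \<bar>t\<bar>)) \<partial>lborel) < \<infinity>"
proof -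
  define \<sigma> where "\<sigma> = sqrt (1 / (2 * a))"
  have "\<sigma> > 0" "\<sigma>\<^sup>2 = 1 / (2 * a)"
    using assms by (simp_all add: \<sigma>_def)
  then have density: "exp (- a * t\<^sup>2) = sqrt (pi / a) * normal_density 0 \<sigma> t" for t
    using assms by (simp add: normal_density_def real_sqrt_divide)
  have "integrable lborel (\<lambda>t. sqrt (pi / a) * (normal_density 0 \<sigma> t + normal_density 0 \<sigma> t * \<bar>t - 0\<bar> ^ 1))"
    using \<open>\<sigma> > 0\<close> by (intro integrable_mult_right Bochner_Integration.integrable_add
        integrable_normal_density integrable_normal_moment_abs)
  then have "integrable lborel (\<lambda>t. exp (- a * t\<^sup>2) * (1 + \<bar>t\<bar>))"
    unfolding density by (simp add: algebra_simps)
  then show ?thesis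
    by (simp add: integrable_iff_bounded abs_mult)
qed

lemma nn_integral_exp_neg_square_moment_finite:
  fixes a :: real
  assumes "a > 0"
  shows "(\<integral>\<^sup>+x. ennreal (exp (- a * (norm x)\<^sup>2) * (1 + norm (x::'a::euclidean_space))) \<partial>lborel) < \<infinity>"
proof -
  let ?f = "\<lambda>t. exp (- a * t\<^sup>2) * (1 + \<bar>t\<bar>)"
  have "exp (- a * (norm x)\<^sup>2) * (1 + norm x) \<le> (\<Prod>b\<in>Basis. ?f (x \<bullet> b))" for x :: 'a
  proof -
    have "(norm x)\<^sup>2 = (\<Sum>b\<in>Basis. (x \<bullet> b)\<^sup>2)"
      by (subst power2_norm_eq_inner) (simp add: euclidean_inner[of x x] power2_eq_square)
    then have exp_split: "exp (- a * (norm x)\<^sup>2) = (\<Prod>b\<in>Basis. exp (- a * (x \<bullet> b)\<^sup>2))"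
      by (simp add: sum_distrib_left exp_sum)
    have "1 + norm x \<le> (\<Prod>b\<in>Basis. 1 + \<bar>x \<bullet> b\<bar>)"
      using norm_le_l1[of x] one_add_sum_le_prod_one_add[of Basis "\<lambda>b. \<bar>x \<bullet> b\<bar>"] by simp
    then show ?thesis
      unfolding exp_split prod.distrib by (intro mult_left_mono) (auto intro: prod_nonneg)
  qed
  then have "(\<integral>\<^sup>+x. ennreal (exp (- a * (norm x)\<^sup>2) * (1 + norm (x::'a))) \<partial>lborel)
      \<le> (\<integral>\<^sup>+x. (\<Prod>b\<in>Basis. ennreal (?f ((x::'a) \<bullet> b))) \<partial>lborel)"
    by (intro nn_integral_mono) (simp add: prod_ennreal ennreal_leI)
  also have "\<dots> = (\<Prod>b\<in>(Basis::'a set). \<integral>\<^sup>+t. ennreal (?f t) \<partial>lborel)"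
    by (rule nn_integral_lborel_prod) auto
  also have "\<dots> < \<infinity>"
    using nn_integral_exp_neg_square_moment_finite_real[OF assms]
    by (simp add: power_less_top_ennreal)
  finally show ?thesis .
qed

lemma gauss_pdf_le_exp_neg_square:
  fixes S :: "real^'n^'n"
  assumes "sym_pos_def_matrix S"
  obtains c where "c > 0" "\<And>m x. gauss_pdf m S x \<le> gauss_pdf m S m * exp (- c * (norm (x - m))\<^sup>2)"
proof -
  obtain c where c: "c > 0" "\<And>x. c * (norm x)\<^sup>2 \<le> x \<bullet> (matrix_inv S *v x)"
    using quadratic_form_coercive sym_pos_def_matrix_inv_pos[OF assms] by blast
  have "gauss_pdf m S x \<le> gauss_pdf m S m * exp (- (c / 2) * (norm (x - m))\<^sup>2)" for m x
    using c(2)[of "x - m"] unfolding gauss_pdf_def by (auto intro!: mult_left_mono)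
  then show ?thesis
    using that c(1) by (metis half_gt_zero)
qed

lemma nn_integral_lborel_translate:
  fixes g :: "'a::euclidean_space \<Rightarrow> ennreal"
  assumes [measurable]: "g \<in> borel_measurable borel"
  shows "(\<integral>\<^sup>+x. g (x + v) \<partial>lborel) = integral\<^sup>N lborel g"
proof -
  have "integral\<^sup>N lborel g = integral\<^sup>N (distr lborel borel ((+) v)) g"
    by (simp add: lborel_distr_plus)
  also have "\<dots> = (\<integral>\<^sup>+x. g (v + x) \<partial>lborel)"
    by (rule nn_integral_distr) auto
  finally show ?thesis
    by (simp add: add.commute)
qed

lemma nn_integral_gauss_pdf_moment_finite:
  fixes S :: "real^'n^'n"
  assumes "sym_pos_def_matrix S"
  shows "(\<integral>\<^sup>+x. ennreal (gauss_pdf m S x * (1 + norm x)) \<partial>lborel) < \<infinity>"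
proof -
  obtain c where c: "c > 0" "\<And>x. gauss_pdf m S x \<le> gauss_pdf m S m * exp (- c * (norm (x - m))\<^sup>2)"
    using gauss_pdf_le_exp_neg_square[OF assms] by metis
  define K where "K = gauss_pdf m S m * (1 + norm m)"
  have K: "K \<ge> 0"
    using gauss_pdf_pos[OF sym_pos_def_matrix_det_nonzero[OF assms], of m m]
    unfolding K_def by (intro mult_nonneg_nonneg) auto
  let ?g = "\<lambda>y. ennreal (exp (- c * (norm y)\<^sup>2) * (1 + norm (y::real^'n)))"
  have "1 + norm x \<le> (1 + norm m) * (1 + norm (x - m))" for x
    using norm_triangle_ineq[of m "x - m"] mult_nonneg_nonneg[of "norm m" "norm (x - m)"]
    by (simp add: algebra_simps del: mult_nonneg_nonneg)
  then have "gauss_pdf m S x * (1 + norm x) \<le>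
      (gauss_pdf m S m * exp (- c * (norm (x - m))\<^sup>2)) * ((1 + norm m) * (1 + norm (x - m)))" for x
    using c(2)[of x] gauss_pdf_pos[OF sym_pos_def_matrix_det_nonzero[OF assms], of m x]
    by (intro mult_mono) auto
  then have "(\<integral>\<^sup>+x. ennreal (gauss_pdf m S x * (1 + norm x)) \<partial>lborel)
      \<le> (\<integral>\<^sup>+x. ennreal K * ?g (x + (- m)) \<partial>lborel)"
    using K by (intro nn_integral_mono) (simp add: ennreal_mult'[symmetric] K_def mult_ac ennreal_leI)
  also have "\<dots> = ennreal K * (\<integral>\<^sup>+x. ?g (x + (- m)) \<partial>lborel)"
    by (rule nn_integral_cmult) simp
  also have "\<dots> = ennreal K * (\<integral>\<^sup>+x. ?g x \<partial>lborel)"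
    by (subst nn_integral_lborel_translate) auto
  also have "\<dots> < \<infinity>"
    using nn_integral_exp_neg_square_moment_finite[OF c(1), where 'a = "real^'n"]
    by (simp add: ennreal_mult_less_top)
  finally show ?thesis .
qed

lemma finite_measure_gaussian:
  assumes "sym_pos_def_matrix S"
  shows "finite_measure (gaussian m S)"
proof (rule finite_measureI)
  have "emeasure (gaussian m S) (space (gaussian m S))
      \<le> (\<integral>\<^sup>+x. ennreal (gauss_pdf m S x * (1 + norm x)) \<partial>lborel)"
    unfolding gaussian_def
    using gauss_pdf_pos[OF sym_pos_def_matrix_det_nonzero[OF assms]]
    by (auto simp: emeasure_density less_imp_le intro!: nn_integral_mono ennreal_leI)
  also have "\<dots> < \<infinity>"
    by (rule nn_integral_gauss_pdf_moment_finite[OF assms])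
  finally show "emeasure (gaussian m S) (space (gaussian m S)) \<noteq> \<infinity>"
    by simp
qed

lemma integrable_gaussian_id:
  assumes "sym_pos_def_matrix S"
  shows "integrable (gaussian m S) (\<lambda>x. x)"
proof (subst integrable_iff_bounded, intro conjI)
  have "(\<integral>\<^sup>+x. ennreal (norm x) \<partial>gaussian m S) \<le> (\<integral>\<^sup>+x. ennreal (gauss_pdf m S x * (1 + norm x)) \<partial>lborel)"
    unfolding gaussian_def using gauss_pdf_pos[OF sym_pos_def_matrix_det_nonzero[OF assms]]
    by (subst nn_integral_density)
      (auto intro!: nn_integral_mono simp: ennreal_mult'[symmetric] less_imp_le ennreal_leI)
  also have "\<dots> < \<infinity>"
    by (rule nn_integral_gauss_pdf_moment_finite[OF assms])
  finally show "(\<integral>\<^sup>+x. ennreal (norm x) \<partial>gaussian m S) < \<infinity>" .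
qed simp

subsection \<open>Optimal transport along translations\<close>

lemma nn_integral_eq_if_integrable:
  fixes f :: "'a \<Rightarrow> real"
  assumes "f \<in> borel_measurable M" "\<And>x. 0 \<le> f x"
  shows "(\<integral>\<^sup>+x. ennreal (f x) \<partial>M) = (if integrable M f then ennreal (integral\<^sup>L M f) else \<infinity>)"
  using assms by (auto simp: nn_integral_eq_integral integrable_iff_bounded less_top[symmetric])

lemma norm_diff_translate_sq:
  fixes x y w :: "'a::real_inner"
  shows "(norm (x - (y + w)))\<^sup>2 = (norm (x - y))\<^sup>2 + ((norm w)\<^sup>2 - 2 * (w \<bullet> (x - y)))"
  by (simp add: power2_norm_eq_inner inner_diff_left inner_diff_right inner_add_left inner_add_right
      inner_commute algebra_simps)

lemma integrable_translate_square_iff: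
  fixes M :: "'a::euclidean_space measure"
  assumes "finite_measure M" "integrable M (\<lambda>x. x)" "integrable M V"
  shows "integrable M (\<lambda>x. (norm (x - (V x + w)))\<^sup>2) \<longleftrightarrow> integrable M (\<lambda>x. (norm (x - V x))\<^sup>2)"
    and "integrable M (\<lambda>x. (norm (x - V x))\<^sup>2) \<Longrightarrow>
      (\<integral>x. (norm (x - (V x + w)))\<^sup>2 \<partial>M) = (\<integral>x. (norm (x - V x))\<^sup>2 \<partial>M)
        + ((norm w)\<^sup>2 * measure M (space M) - 2 * (w \<bullet> (integral\<^sup>L M (\<lambda>x. x) - integral\<^sup>L M V)))"
proof -
  interpret finite_measure M by fact
  let ?h = "\<lambda>x. (norm w)\<^sup>2 - 2 * (w \<bullet> (x - V x))"
  have h: "integrable M ?h"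
    using assms(2,3) by simp
  have "integral\<^sup>L M ?h = (norm w)\<^sup>2 * measure M (space M) - 2 * (w \<bullet> (integral\<^sup>L M (\<lambda>x. x) - integral\<^sup>L M V))"
    using assms(2,3) by (simp add: Bochner_Integration.integral_diff)
  moreover have eq: "(\<lambda>x. (norm (x - (V x + w)))\<^sup>2) = (\<lambda>x. (norm (x - V x))\<^sup>2 + ?h x)"
    by (simp add: norm_diff_translate_sq)
  ultimately show "integrable M (\<lambda>x. (norm (x - V x))\<^sup>2) \<Longrightarrow>
      (\<integral>x. (norm (x - (V x + w)))\<^sup>2 \<partial>M) = (\<integral>x. (norm (x - V x))\<^sup>2 \<partial>M)
        + ((norm w)\<^sup>2 * measure M (space M) - 2 * (w \<bullet> (integral\<^sup>L M (\<lambda>x. x) - integral\<^sup>L M V)))"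
    using h by simp
  show "integrable M (\<lambda>x. (norm (x - (V x + w)))\<^sup>2) \<longleftrightarrow> integrable M (\<lambda>x. (norm (x - V x))\<^sup>2)"
  proof
    assume "integrable M (\<lambda>x. (norm (x - (V x + w)))\<^sup>2)"
    from Bochner_Integration.integrable_diff[OF this h] show "integrable M (\<lambda>x. (norm (x - V x))\<^sup>2)"
      by (simp add: norm_diff_translate_sq)
  next
    assume "integrable M (\<lambda>x. (norm (x - V x))\<^sup>2)"
    from Bochner_Integration.integrable_add[OF this h] show "integrable M (\<lambda>x. (norm (x - (V x + w)))\<^sup>2)"
      unfolding eq .
  qed
qed

text \<open>Translating two competing maps with the same mean changes their costs by the same finite amount.\<close>
lemma transport_cost_translate_le_iff:
  fixes M :: "(real^'n) measure"
  assumes "finite_measure M" "integrable M (\<lambda>x. x)"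
    and "integrable M U" "integrable M W" "integral\<^sup>L M U = integral\<^sup>L M W"
  shows "transport_cost M (\<lambda>x. W x + w) \<le> transport_cost M (\<lambda>x. U x + w) \<longleftrightarrow>
    transport_cost M W \<le> transport_cost M U"
proof -
  let ?I = "\<lambda>V. integrable M (\<lambda>x. (norm (x - V x))\<^sup>2)"
  let ?cost = "\<lambda>V. \<integral>x. (norm (x - V x))\<^sup>2 \<partial>M"
  define c where "c = (norm w)\<^sup>2 * measure M (space M) - 2 * (w \<bullet> (integral\<^sup>L M (\<lambda>x. x) - integral\<^sup>L M U))"
  have cost: "transport_cost M V = (if ?I V then ennreal (?cost V) else \<infinity>)"
    if "integrable M V" for V
  proof -
    have [measurable]: "(\<lambda>x. x) \<in> borel_measurable M" "V \<in> borel_measurable M"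
      using assms(2) that by (simp_all add: borel_measurable_integrable)
    show ?thesis
      unfolding transport_cost_def
      by (intro nn_integral_eq_if_integrable borel_measurable_power borel_measurable_norm
          borel_measurable_diff) simp_all
  qed
  have translated: "transport_cost M (\<lambda>x. V x + w) = (if ?I V then ennreal (?cost V + c) else \<infinity>)"
    and nonneg: "?I V \<Longrightarrow> 0 \<le> ?cost V + c"
    if "integrable M V" "integral\<^sup>L M V = integral\<^sup>L M U" for V
  proof -
    have "integrable M (\<lambda>x. V x + w)"
      using Bochner_Integration.integrable_add[OF that(1) finite_measure.integrable_const[OF assms(1)]] .
    then show "transport_cost M (\<lambda>x. V x + w) = (if ?I V then ennreal (?cost V + c) else \<infinity>)"
      using integrable_translate_square_iff[OF assms(1,2) that(1), of w] cost that(2)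
      by (simp add: c_def)
    show "0 \<le> ?cost V + c" if "?I V"
      using integrable_translate_square_iff(2)[OF assms(1,2) \<open>integrable M V\<close> \<open>?I V\<close>, of w]
        \<open>integral\<^sup>L M V = integral\<^sup>L M U\<close> Bochner_Integration.integral_nonneg[of M "\<lambda>x. (norm (x - (V x + w)))\<^sup>2"]
      by (simp add: c_def)
  qed
  show ?thesis
    using translated[OF assms(3)] translated[OF assms(4)] cost[OF assms(3)] cost[OF assms(4)]
      nonneg[OF assms(3)] assms(5)
    by (auto simp: ennreal_le_iff top_unique)
qed

lemma transport_cost_distr_translate:
  fixes M :: "(real^'n) measure"
  assumes "sets M = sets borel" "S \<in> borel_measurable borel"
  shows "transport_cost (distr M lborel (\<lambda>x. x + v)) S = transport_cost M (\<lambda>x. S (x + v) + (- v))"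
  unfolding transport_cost_def using assms
  by (subst nn_integral_distr) (auto simp: measurable_cong_sets[OF assms(1) refl] algebra_simps)

lemma measurable_comp_translate_iff:
  "T \<circ> (\<lambda>x. x + v) \<in> borel_measurable borel \<longleftrightarrow> T \<in> borel_measurable (borel :: 'a::euclidean_space measure)"
proof
  assume "T \<circ> (\<lambda>x. x + v) \<in> borel_measurable borel"
  then have "(T \<circ> (\<lambda>x. x + v)) \<circ> (\<lambda>x. x + (- v)) \<in> borel_measurable borel"
    by (rule measurable_comp[rotated]) simp
  then show "T \<in> borel_measurable borel"
    by (simp add: o_def)
qed simp

lemma integrable_push_forward:
  assumes "U \<in> borel_measurable M" "distr M lborel U = \<nu>" "integrable \<nu> (\<lambda>y. y)"
  shows "integrable M U" "integral\<^sup>L M U = integral\<^sup>L \<nu> (\<lambda>y. y)"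
proof -
  have U: "U \<in> measurable M lborel"
    using assms(1) by simp
  show "integrable M U"
    using assms(3) integrable_distr_eq[OF U, of "\<lambda>y. y"] unfolding assms(2) by simp
  show "integral\<^sup>L M U = integral\<^sup>L \<nu> (\<lambda>y. y)"
    using integral_distr[OF U, of "\<lambda>y. y"] unfolding assms(2) by simp
qed

lemma transport_cost_distr_translate_le_iff:
  fixes M \<nu> :: "(real^'n) measure"
  assumes M: "finite_measure M" "sets M = sets borel" "integrable M (\<lambda>x. x)"
    and \<nu>: "integrable \<nu> (\<lambda>y. y)"
    and T: "T \<in> borel_measurable borel" "distr M lborel (T \<circ> (\<lambda>x. x + v)) = \<nu>"
    and S: "S \<in> borel_measurable borel" "distr M lborel (S \<circ> (\<lambda>x. x + v)) = \<nu>"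
  shows "transport_cost (distr M lborel (\<lambda>x. x + v)) T \<le> transport_cost (distr M lborel (\<lambda>x. x + v)) S
    \<longleftrightarrow> transport_cost M (T \<circ> (\<lambda>x. x + v)) \<le> transport_cost M (S \<circ> (\<lambda>x. x + v))"
proof -
  have "borel_measurable M = (borel_measurable borel :: (real^'n \<Rightarrow> real^'n) set)"
    by (rule measurable_cong_sets[OF M(2) refl])
  then have "T \<circ> (\<lambda>x. x + v) \<in> borel_measurable M" "S \<circ> (\<lambda>x. x + v) \<in> borel_measurable M"
    using T(1) S(1) by (simp_all add: measurable_comp_translate_iff)
  note T' = integrable_push_forward[OF this(1) T(2) \<nu>] and S' = integrable_push_forward[OF this(2) S(2) \<nu>]
  show ?thesis
    using transport_cost_translate_le_iff[OF M(1,3) S'(1) T'(1), of "- v"] S'(2) T'(2) T(1) S(1)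
    by (simp add: transport_cost_distr_translate[OF M(2)] o_def)
qed

lemma is_ot_map_translate_iff:
  fixes M \<nu> :: "(real^'n) measure"
  assumes M: "finite_measure M" "sets M = sets borel" "integrable M (\<lambda>x. x)"
    and \<nu>: "integrable \<nu> (\<lambda>y. y)"
  shows "is_ot_map (distr M lborel (\<lambda>x. x + v)) \<nu> T \<longleftrightarrow> is_ot_map M \<nu> (T \<circ> (\<lambda>x. x + v))"
proof -
  let ?\<phi> = "\<lambda>x::real^'n. x + v"
  let ?M\<phi> = "distr M lborel ?\<phi>"
  have meas_M [simp]: "borel_measurable M = (borel_measurable borel :: (real^'n \<Rightarrow> real^'n) set)"
    by (rule measurable_cong_sets[OF M(2) refl])
  have distr_comp: "distr M lborel (S \<circ> ?\<phi>) = distr ?M\<phi> lborel S" if "S \<in> borel_measurable borel" for S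
    using that by (subst distr_distr) auto
  have cost_le_iff: "transport_cost ?M\<phi> T \<le> transport_cost ?M\<phi> S \<longleftrightarrow>
      transport_cost M (T \<circ> ?\<phi>) \<le> transport_cost M (S \<circ> ?\<phi>)"
    if "T \<in> borel_measurable borel" "distr ?M\<phi> lborel T = \<nu>"
      "S \<in> borel_measurable borel" "distr ?M\<phi> lborel S = \<nu>" for S T
    using transport_cost_distr_translate_le_iff[OF assms that(1) _ that(3)] that(2,4)
      distr_comp[OF that(1)] distr_comp[OF that(3)] by simp
  show ?thesis
  proof (cases "T \<in> borel_measurable borel \<and> distr ?M\<phi> lborel T = \<nu>")
    case False
    then show ?thesis
      unfolding is_ot_map_def using distr_comp measurable_comp_translate_iff by auto
  next
    case True
    have "(\<forall>S. S \<in> borel_measurable borel \<and> distr ?M\<phi> lborel S = \<nu> \<longrightarrow>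
          transport_cost ?M\<phi> T \<le> transport_cost ?M\<phi> S) \<longleftrightarrow>
        (\<forall>U. U \<in> borel_measurable borel \<and> distr M lborel U = \<nu> \<longrightarrow>
          transport_cost M (T \<circ> ?\<phi>) \<le> transport_cost M U)"
    proof (intro iffI allI impI)
      fix U assume opt: "\<forall>S. S \<in> borel_measurable borel \<and> distr ?M\<phi> lborel S = \<nu> \<longrightarrow>
          transport_cost ?M\<phi> T \<le> transport_cost ?M\<phi> S"
        and U: "U \<in> borel_measurable borel \<and> distr M lborel U = \<nu>"
      define S where "S = U \<circ> (\<lambda>x. x + (- v))"
      have S: "S \<circ> ?\<phi> = U" "S \<in> borel_measurable borel"
        using U by (auto simp: S_def o_def fun_eq_iff)
      have "distr ?M\<phi> lborel S = \<nu>"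
        using distr_comp[OF S(2)] S(1) U by simp
      then have "transport_cost ?M\<phi> T \<le> transport_cost ?M\<phi> S"
        using opt S(2) by blast
      then show "transport_cost M (T \<circ> ?\<phi>) \<le> transport_cost M U"
        using cost_le_iff True S(2) \<open>distr ?M\<phi> lborel S = \<nu>\<close> S(1) by auto
    next
      fix S assume opt: "\<forall>U. U \<in> borel_measurable borel \<and> distr M lborel U = \<nu> \<longrightarrow>
          transport_cost M (T \<circ> ?\<phi>) \<le> transport_cost M U"
        and S: "S \<in> borel_measurable borel \<and> distr ?M\<phi> lborel S = \<nu>"
      then have "transport_cost M (T \<circ> ?\<phi>) \<le> transport_cost M (S \<circ> ?\<phi>)"
        using distr_comp[of S] measurable_comp_translate_iff[of S v] by auto
      then show "transport_cost ?M\<phi> T \<le> transport_cost ?M\<phi> S"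
        using cost_le_iff True S by auto
    qed
    then show ?thesis
      unfolding is_ot_map_def using True distr_comp measurable_comp_translate_iff by auto
  qed
qed

lemma is_ot_map_id:
  fixes \<nu> :: "(real^'n) measure"
  assumes "sets \<nu> = sets borel"
  shows "is_ot_map \<nu> \<nu> id"
  using assms measurable_cong_sets[OF assms refl, of borel]
  by (simp add: is_ot_map_def transport_cost_def distr_id2 id_def)

text \<open>The translation is optimal because the identity is optimal between the translate and itself.\<close>
lemma is_ot_map_translate:
  fixes M :: "(real^'n) measure"
  assumes "finite_measure M" "sets M = sets borel" "integrable M (\<lambda>x. x)"
  shows "is_ot_map M (distr M lborel (\<lambda>x. x + v)) (\<lambda>x. x + v)"
proof -
  interpret finite_measure M by fact
  have "integrable M (\<lambda>x. x + v)"
    using assms(3) by simp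
  then have "integrable (distr M lborel (\<lambda>x. x + v)) (\<lambda>y. y)"
    using assms(2) by (subst integrable_distr_eq) (auto simp: measurable_cong_sets[OF assms(2) refl])
  then show ?thesis
    using is_ot_map_translate_iff[OF assms, of "distr M lborel (\<lambda>x. x + v)" v id]
      is_ot_map_id[of "distr M lborel (\<lambda>x. x + v)"]
    by simp
qed

lemma is_ot_map_gaussian_translate:
  "sym_pos_def_matrix S \<Longrightarrow> is_ot_map (gaussian m S) (gaussian (m + v) S) (\<lambda>x. x + v)"
  using is_ot_map_translate[OF finite_measure_gaussian sets_gaussian integrable_gaussian_id]
  by (simp add: distr_gaussian_translate)

lemma is_ot_map_gaussian_translate_iff:
  "sym_pos_def_matrix S \<Longrightarrow>
    is_ot_map (gaussian (m + v) S) (gaussian m' S) T \<longleftrightarrow> is_ot_map (gaussian m S) (gaussian m' S) (T \<circ> (\<lambda>x. x + v))"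
  using is_ot_map_translate_iff[OF finite_measure_gaussian sets_gaussian integrable_gaussian_id
      integrable_gaussian_id]
  by (simp add: distr_gaussian_translate)

subsection \<open>Coin Wasserstein gradient descent from a Gaussian\<close>

lemma coin_update_translation:
  fixes G \<phi> :: "nat \<Rightarrow> 'a::real_inner \<Rightarrow> 'a"
  assumes G_const: "\<And>s x y. s \<in> {1..t-1} \<Longrightarrow> G s x = G s y"
    and translation: "\<And>s x y. s \<in> {1..t-1} \<Longrightarrow> \<phi> s x - x = \<phi> s y - y"
    and update: "\<And>x. \<phi> t x = x - ((w0 - (\<Sum>s\<in>{1..t-1}. ((1/L) *\<^sub>R G s (\<phi> s x)) \<bullet> (\<phi> s x - x))) / (L * real t))
                  *\<^sub>R (\<Sum>s\<in>{1..t-1}. G s (\<phi> s x))"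
  shows "\<phi> t x - x = \<phi> t y - y"
proof -
  have same: "G s (\<phi> s x) = G s (\<phi> s y)" "\<phi> s x - x = \<phi> s y - y" if "s \<in> {1..t-1}" for s
    using G_const translation that by blast+
  have "(\<Sum>s\<in>{1..t-1}. ((1/L) *\<^sub>R G s (\<phi> s x)) \<bullet> (\<phi> s x - x))
      = (\<Sum>s\<in>{1..t-1}. ((1/L) *\<^sub>R G s (\<phi> s y)) \<bullet> (\<phi> s y - y))"
    "(\<Sum>s\<in>{1..t-1}. G s (\<phi> s x)) = (\<Sum>s\<in>{1..t-1}. G s (\<phi> s y))"
    by (auto intro!: sum.cong simp: same)
  then show ?thesis
    using update[of x] update[of y] by simp
qed

lemma coin_wgd_gaussian_translate:
  assumes "coin_wgd (gaussian m0 \<Sigma>) \<pi> w0 L \<phi> \<mu>" "t \<ge> 1" "\<phi> t = (\<lambda>x. x + (\<phi> t m0 - m0))"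
  shows "\<mu> t = gaussian (\<phi> t m0) \<Sigma>"
proof -
  have "\<mu> t = distr (gaussian m0 \<Sigma>) lborel (\<phi> t)"
    using assms(1,2) by (simp add: coin_wgd_def)
  then show ?thesis
    using assms(3) distr_gaussian_translate[of m0 \<Sigma> "\<phi> t m0 - m0"] by simp
qed

lemma coin_wgd_gaussian_step:
  fixes \<Sigma> :: "real^'n^'n"
  assumes "sym_pos_def_matrix \<Sigma>"
    and run: "coin_wgd (gaussian m0 \<Sigma>) (gaussian m\<pi> \<Sigma>) w0 L \<phi> \<mu>"
    and "t \<ge> 2"
    and earlier: "\<And>s. s \<in> {1..t-1} \<Longrightarrow> \<phi> s = (\<lambda>x. x + (\<phi> s m0 - m0))"
  shows "\<phi> t = (\<lambda>x. x + (\<phi> t m0 - m0))"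
proof -
  obtain G :: "nat \<Rightarrow> real^'n \<Rightarrow> real^'n" where
    grad: "\<forall>t\<ge>1. wgrad_KL (\<mu> t) (gaussian m\<pi> \<Sigma>) (G t)" and
    update: "\<forall>t\<ge>2. \<forall>x. \<phi> t x =
            x - ((w0 - (\<Sum>s\<in>{1..t-1}. ((1/L) *\<^sub>R G s (\<phi> s x)) \<bullet> (\<phi> s x - x))) / (L * real t))
                  *\<^sub>R (\<Sum>s\<in>{1..t-1}. G s (\<phi> s x))"
    using run unfolding coin_wgd_def by blast
  have G_const: "G s x = G s y" if "s \<in> {1..t-1}" for s x y
  proof -
    have "wgrad_KL (gaussian (\<phi> s m0) \<Sigma>) (gaussian m\<pi> \<Sigma>) (G s)"
      using grad coin_wgd_gaussian_translate[OF run _ earlier[OF that]] that by force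
    then show ?thesis
      by (rule wgrad_KL_gaussian_const[OF sym_pos_def_matrix_det_nonzero[OF assms(1)]])
  qed
  have "\<phi> t x - x = \<phi> t m0 - m0" for x
  proof (rule coin_update_translation[where G = G])
    show "\<phi> s x - x = \<phi> s y - y" if "s \<in> {1..t-1}" for s x y
      by (subst (1 2) earlier[OF that]) simp
    show "\<phi> t x = x - ((w0 - (\<Sum>s\<in>{1..t-1}. ((1/L) *\<^sub>R G s (\<phi> s x)) \<bullet> (\<phi> s x - x))) / (L * real t))
        *\<^sub>R (\<Sum>s\<in>{1..t-1}. G s (\<phi> s x))" for x
      using update \<open>t \<ge> 2\<close> by simp
  qed (rule G_const)
  then show ?thesis
    by (auto simp: fun_eq_iff algebra_simps)
qed

lemma coin_wgd_gaussian_translations: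
  fixes \<Sigma> :: "real^'n^'n"
  assumes "sym_pos_def_matrix \<Sigma>"
    and run: "coin_wgd (gaussian m0 \<Sigma>) (gaussian m\<pi> \<Sigma>) w0 L \<phi> \<mu>"
    and "t \<ge> 1"
  shows "\<phi> t = (\<lambda>x. x + (\<phi> t m0 - m0))"
  using \<open>t \<ge> 1\<close>
proof (induction t rule: less_induct)
  case (less t)
  show ?case
  proof (cases "t = 1")
    case True
    then show ?thesis
      using run by (simp add: coin_wgd_def)
  next
    case False
    show ?thesis
    proof (rule coin_wgd_gaussian_step[OF assms(1) run])
      show "t \<ge> 2"
        using False less.prems by simp
      show "\<phi> s = (\<lambda>x. x + (\<phi> s m0 - m0))" if "s \<in> {1..t-1}" for s
        using less.IH[of s] that by auto
    qed
  qed
qed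

theorem mainTheorem5:
  fixes \<Sigma> :: "real^'n^'n" and m0 m\<pi> :: "real^'n" and w0 L :: real
    and \<phi> :: "nat \<Rightarrow> real^'n \<Rightarrow> real^'n" and \<mu> :: "nat \<Rightarrow> (real^'n) measure"
  assumes "sym_pos_def_matrix \<Sigma>"
    and "w0 > 0" and "L > 0"
    and "coin_wgd (gaussian m0 \<Sigma>) (gaussian m\<pi> \<Sigma>) w0 L \<phi> \<mu>"
  shows "\<exists>m :: nat \<Rightarrow> real^'n. m 1 = m0 \<and>
           (\<forall>t\<ge>1. \<mu> t = gaussian (m t) \<Sigma> \<and> (\<forall>x. \<phi> t x = m t + (x - m0)) \<and>
                   is_ot_map (gaussian m0 \<Sigma>) (\<mu> t) (\<phi> t) \<and>
                   (\<forall>T. is_ot_map (\<mu> t) (gaussian m\<pi> \<Sigma>) T \<longleftrightarrow>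
                        is_ot_map (gaussian m0 \<Sigma>) (gaussian m\<pi> \<Sigma>) (T \<circ> \<phi> t)))"
proof -
  define m where "m t = \<phi> t m0" for t
  have "m 1 = m0"
    using assms(4) by (simp add: coin_wgd_def m_def)
  moreover have "\<mu> t = gaussian (m t) \<Sigma> \<and> (\<forall>x. \<phi> t x = m t + (x - m0)) \<and>
      is_ot_map (gaussian m0 \<Sigma>) (\<mu> t) (\<phi> t) \<and>
      (\<forall>T. is_ot_map (\<mu> t) (gaussian m\<pi> \<Sigma>) T \<longleftrightarrow>
        is_ot_map (gaussian m0 \<Sigma>) (gaussian m\<pi> \<Sigma>) (T \<circ> \<phi> t))" if "t \<ge> 1" for t
  proof -
    have "\<phi> t = (\<lambda>x. x + (m t - m0))" "\<mu> t = gaussian (m t) \<Sigma>"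
      using coin_wgd_gaussian_translations[OF assms(1,4) that]
        coin_wgd_gaussian_translate[OF assms(4) that] by (simp_all add: m_def)
    then show ?thesis
      using is_ot_map_gaussian_translate[OF assms(1), of m0 "m t - m0"]
        is_ot_map_gaussian_translate_iff[OF assms(1), of m0 "m t - m0"]
      by (simp add: algebra_simps)
  qed
  ultimately show ?thesis
    by blast
qed

end
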